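(* Let $n\ge1$. Then $$\mathbf{C}_n\times\mathbf{C}_n=\sum_{d\mid n}\#\{P\in\mathbf{SP}_n:|\mathrm{Stab}(P)|=d\}\cdot\mathbf{C}_{(d^{n/d})}.$$ Equivalently, the coefficients $b^\mu_{n,n}$ defined by $\mathbf{C}_{(n)}(\mathbf{z})\star\mathbf{C}_{(n)}(\mathbf{z})=\sum_{\mu\vdash n}b^\mu_{n,n}\mathbf{C}_\mu(\mathbf{z})$ satisfy $b^\mu_{n,n}=\#\{P\in\mathbf{SP}_n:|\mathrm{Stab}(P)|=d\}$ if $\mu=(d^{n/d})$ for some $d\mid n$, and $b^\mu_{n,n}=0$ otherwise.
   Context: For $\mu\vdash n$, $\sigma_\mu$ is the standard permutation of cycle type $\mu$ (cycles filled with $1,\ldots,n$ in increasing order), $\mathbf{C}_\mu=X^n/\langle\sigma_\mu\rangle$ where $(X^n/H)[U]=\{\lambda H:\lambda:[n]\to U\text{ bijection}\}$, $\mathbf{C}_n:=\mathbf{C}_{(n)}$, $(d^{n/d})$ is the partition with $n/d$ parts equal to $d$, and $(F\times G)[U]=F[U]\times G[U]$; $\mathbf{C}_\mu(\mathbf{z})=\frac{1}{o(\sigma_\mu)}\sum_{g\in\langle\sigma_\mu\rangle}p_{\lambda(g)}$ is the cycle index, forming a basis of $\Lambda_n\otimes\mathbb{Q}$, and $\star$ is the Kronecker product ($p_\lambda\star p_\nu=\delta_{\lambda\nu}z_\lambda p_\lambda$). Steggall patterns: the group $\mathbb{Z}_n\times\mathbb{Z}_n$ acts on permutations $(P_1,\ldots,P_n)$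 of $[n]$ (viewed as $n$ non-attacking marked cells in an $n\times n$ grid) by $(r,k)\cdot(P_i)_i=(P_{i+r}+k \bmod n)_i$ (indices and values taken mod $n$ in $\{1,\ldots,n\}$), i.e. cyclic shift of indices and translation of values. $\mathbf{SP}_n$ is the set of orbits (Steggall patterns). For $P\in\mathbf{SP}_n$, $\mathrm{Stab}(P)=\{(r,k)\in\mathbb{Z}_n\times\mathbb{Z}_n:(P_{i+r}+k\bmod n)_i=(P_i)_i\}$ computed for any representative $(P_i)_i$ of the orbit (independent of the representative since the group is abelian). *)

theory Defs
  imports Main "HOL-Library.FuncSet" "HOL-Combinatorics.Permutations"
begin

text \<open>A partition mu is given as a list of its parts. The standard permutation
  sigma_mu of [n] = {1..n}: the cycles are consecutive blocks of 1..n of lengths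
  mu_1, mu_2, ..., each cycle mapping i to i+1 and the last element of the block
  back to its first element.\<close>

definition std_perm :: "nat list \<Rightarrow> nat \<Rightarrow> nat" where
  "std_perm mu i =
     (let s = (\<lambda>k. sum_list (take k mu)) in
      if (\<exists>k<length mu. s k < i \<and> i \<le> s (Suc k)) then
        (let k = (THE k. k < length mu \<and> s k < i \<and> i \<le> s (Suc k)) in
           if i = s (Suc k) then s k + 1 else i + 1)
      else i)"

definition cyc_group :: "(nat \<Rightarrow> nat) \<Rightarrow> (nat \<Rightarrow> nat) set" where
  "cyc_group \<sigma> = range (\<lambda>k. \<sigma> ^^ k)"

definition lcoset :: "(nat \<Rightarrow> 'a) \<Rightarrow> (nat \<Rightarrow> nat) set \<Rightarrow> (nat \<Rightarrow> 'a) set" where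
  "lcoset lam H = (\<lambda>h. lam \<circ> h) ` H"

definition quot_species :: "nat \<Rightarrow> (nat \<Rightarrow> nat) set \<Rightarrow> 'a set \<Rightarrow> (nat \<Rightarrow> 'a) set set" where
  "quot_species n H U =
     {lcoset lam H | lam. bij_betw lam {1..n} U \<and> lam \<in> extensional {1..n}}"

definition quot_transport :: "nat \<Rightarrow> ('a \<Rightarrow> 'b) \<Rightarrow> (nat \<Rightarrow> 'a) set \<Rightarrow> (nat \<Rightarrow> 'b) set" where
  "quot_transport n f s = (\<lambda>lam. restrict (f \<circ> lam) {1..n}) ` s"

definition C_species :: "nat list \<Rightarrow> 'a set \<Rightarrow> (nat \<Rightarrow> 'a) set set" where
  "C_species mu U = quot_species (sum_list mu) (cyc_group (std_perm mu)) U"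

definition stg_act :: "nat \<Rightarrow> nat \<Rightarrow> nat \<Rightarrow> (nat \<Rightarrow> nat) \<Rightarrow> (nat \<Rightarrow> nat)" where
  "stg_act n r k P =
     (\<lambda>i. if i \<in> {1..n} then (P ((i - 1 + r) mod n + 1) - 1 + k) mod n + 1 else i)"

definition stg_orbit :: "nat \<Rightarrow> (nat \<Rightarrow> nat) \<Rightarrow> (nat \<Rightarrow> nat) set" where
  "stg_orbit n P = {stg_act n r k P | r k. r < n \<and> k < n}"

definition SP :: "nat \<Rightarrow> (nat \<Rightarrow> nat) set set" where
  "SP n = {stg_orbit n P | P. P permutes {1..n}}"

definition stg_stab :: "nat \<Rightarrow> (nat \<Rightarrow> nat) \<Rightarrow> (nat \<times> nat) set" where
  "stg_stab n P = {(r, k). r < n \<and> k < n \<and> stg_act n r k P = P}"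

definition pattern_stab :: "nat \<Rightarrow> (nat \<Rightarrow> nat) set \<Rightarrow> (nat \<times> nat) set" where
  "pattern_stab n Q = stg_stab n (SOME P. P \<in> Q)"

definition num_patterns_stab :: "nat \<Rightarrow> nat \<Rightarrow> nat" where
  "num_patterns_stab n d = card {Q \<in> SP n. card (pattern_stab n Q) = d}"

definition lhs_species :: "nat \<Rightarrow> 'a set \<Rightarrow> ((nat \<Rightarrow> 'a) set \<times> (nat \<Rightarrow> 'a) set) set" where
  "lhs_species n U = C_species [n] U \<times> C_species [n] U"

definition lhs_transport ::
  "nat \<Rightarrow> ('a \<Rightarrow> 'a) \<Rightarrow> ((nat \<Rightarrow> 'a) set \<times> (nat \<Rightarrow> 'a) set) \<Rightarrow> ((nat \<Rightarrow> 'a) set \<times> (nat \<Rightarrow> 'a) set)" where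
  "lhs_transport n f x = (quot_transport n f (fst x), quot_transport n f (snd x))"

text \<open>(sum over d | n of  m_d * C_(d^(n/d)))[U], with m_d = #{P in SP_n : |Stab P| = d};
  a structure is (d, j, s) with j < m_d indexing the copy.\<close>
definition rhs_species :: "nat \<Rightarrow> 'a set \<Rightarrow> (nat \<times> nat \<times> (nat \<Rightarrow> 'a) set) set" where
  "rhs_species n U =
     {(d, j, s). d dvd n \<and> j < num_patterns_stab n d \<and> s \<in> C_species (replicate (n div d) d) U}"

definition rhs_transport ::
  "nat \<Rightarrow> ('a \<Rightarrow> 'a) \<Rightarrow> (nat \<times> nat \<times> (nat \<Rightarrow> 'a) set) \<Rightarrow> (nat \<times> nat \<times> (nat \<Rightarrow> 'a) set)" where
  "rhs_transport n f x = (case x of (d, j, s) \<Rightarrow> (d, j, quot_transport n f s))"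

end

theory Submission
  imports Defs "HOL-Combinatorics.Cycles"
begin

(* A pair of C_n-structures on U is a pair of cosets (lam1 <c>, lam2 <c>) of labellings
   lam_i : {1..n} -> U, where c is the n-cycle. The relative position P = lam2^-1 o lam1 is
   determined up to P |-> c^k o P o c^r, which is exactly the action defining Steggall patterns,
   so the pair has a well-defined pattern Q. Fix a representative P of Q. The labellings lam of
   the first coset with lam o P^-1 in the second then form a single coset lam <c^r | r in R>,
   where R = {r. c^k o P o c^r = P for some k} is the projection of Stab(P) to the index
   coordinate. The projection is injective, so R is the subgroup of Z_n of order d = |Stab(P)|,
   generated by n/d. Transposing the (n/d) x d grid conjugates c^(n/d) into sigma_(d^(n/d)), so
   the pair becomes a C_(d^(n/d))-structure, and Q selects one of the #{Q. |Stab(Q)| = d} copies.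
   Every construction composes labellings on the right, hence commutes with transport along
   bijections U -> V. *)

section \<open>Standard permutations\<close>

lemma sum_list_take_mono: "k \<le> l \<Longrightarrow> sum_list (take k (xs :: nat list)) \<le> sum_list (take l xs)"
proof (induction xs arbitrary: k l)
  case (Cons x xs)
  then show ?case by (cases k; cases l) auto
qed simp

lemma std_perm_at:
  assumes "k < length mu" "sum_list (take k mu) < i" "i \<le> sum_list (take (Suc k) mu)"
  shows "std_perm mu i = (if i = sum_list (take (Suc k) mu) then sum_list (take k mu) + 1 else i + 1)"
proof -
  let ?block = "\<lambda>k. k < length mu \<and> sum_list (take k mu) < i \<and> i \<le> sum_list (take (Suc k) mu)"
  have unique: "k' = k" if "?block k'" for k'
  proof (rule ccontr)
    assume "k' \<noteq> k"
    then consider "Suc k' \<le> k" | "Suc k \<le> k'" by linarith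
    then show False
    proof cases
      case 1
      then show False using sum_list_take_mono[OF 1, of mu] that assms(2) by linarith
    next
      case 2
      then show False using sum_list_take_mono[OF 2, of mu] that assms(3) by linarith
    qed
  qed
  have "(THE k. ?block k) = k" using assms unique by (intro the_equality) blast+
  moreover have "\<exists>k. ?block k" using assms by blast
  ultimately show ?thesis unfolding std_perm_def Let_def by (simp only: ex_simps if_True)
qed

lemma std_perm_outside:
  assumes "\<not> (\<exists>k<length mu. sum_list (take k mu) < i \<and> i \<le> sum_list (take (Suc k) mu))"
  shows "std_perm mu i = i"
  unfolding std_perm_def Let_def by (simp only: if_not_P[OF assms])

lemma std_perm_single: "std_perm [n] i = (if i \<in> {1..n} then i mod n + 1 else i)"
proof (cases "i \<in> {1..n}")
  case True
  then have "std_perm [n] i = (if i = n then 1 else i + 1)"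
    using std_perm_at[of 0 "[n]" i] by simp
  then show ?thesis using True by auto
next
  case False
  then show ?thesis by (auto intro: std_perm_outside)
qed

lemma std_perm_replicate_block:
  assumes "q < m" "r < d"
  shows "std_perm (replicate m d) (q * d + r + 1) = (if Suc r = d then q * d + 1 else q * d + r + 2)"
proof -
  have "sum_list (take k (replicate m d)) = k * d" if "k \<le> m" for k
    using that by (simp add: min_def sum_list_replicate)
  then have "std_perm (replicate m d) (q * d + r + 1) =
      (if q * d + r + 1 = Suc q * d then q * d + 1 else q * d + r + 2)"
    using std_perm_at[of q "replicate m d" "q * d + r + 1"] assms by simp
  then show ?thesis by simp
qed

lemma std_perm_replicate_outside:
  assumes "i \<notin> {1..m * d}"
  shows "std_perm (replicate m d) i = i"
proof (rule std_perm_outside, safe)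
  fix k assume k: "k < length (replicate m d)" "sum_list (take (Suc k) (replicate m d)) \<ge> i"
    "sum_list (take k (replicate m d)) < i"
  have "Suc k * d \<le> m * d" using k(1) by (intro mult_le_mono1) simp
  then show False using k assms by (auto simp: min_def sum_list_replicate)
qed

section \<open>Labellings and cosets of cyclic groups\<close>

lemma permutes_comp_cancel_right:
  assumes "p permutes S" "f \<circ> p = g \<circ> p"
  shows "f = g"
proof -
  have "f = f \<circ> p \<circ> inv p" using permutes_inv_o(1)[OF assms(1)] by (simp add: comp_assoc)
  also have "\<dots> = g \<circ> p \<circ> inv p" using assms(2) by simp
  also have "\<dots> = g" using permutes_inv_o(1)[OF assms(1)] by (simp add: comp_assoc)
  finally show ?thesis .
qed

lemma permutes_if_inverse:
  assumes "g \<circ> f = id" "f \<circ> g = id" "\<And>x. x \<notin> S \<Longrightarrow> f x = x"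
  shows "f permutes S"
  using o_bij[OF assms(1,2)] assms(3) unfolding permutes_def bij_iff by blast

lemma restrict_comp_permutes:
  assumes "p permutes A"
  shows "restrict (g \<circ> p) A = restrict g A \<circ> p"
proof
  fix i show "restrict (g \<circ> p) A i = (restrict g A \<circ> p) i"
    using permutes_in_image[OF assms, of i] permutes_not_in[OF assms, of i] by auto
qed

definition labelling :: "nat \<Rightarrow> 'a set \<Rightarrow> (nat \<Rightarrow> 'a) \<Rightarrow> bool" where
  "labelling n U lam \<longleftrightarrow> bij_betw lam {1..n} U \<and> lam \<in> extensional {1..n}"

lemma quot_species_iff: "s \<in> quot_species n H U \<longleftrightarrow> (\<exists>lam. labelling n U lam \<and> s = lcoset lam H)"
  unfolding quot_species_def labelling_def by blast

lemma labelling_comp_permutes: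
  assumes "labelling n U lam" "p permutes {1..n}"
  shows "labelling n U (lam \<circ> p)"
  using assms bij_betw_trans[OF permutes_imp_bij] permutes_not_in
  unfolding labelling_def extensional_def by fastforce

lemma labelling_comp_cancel:
  assumes "labelling n U lam" "p permutes {1..n}" "q permutes {1..n}" "lam \<circ> p = lam \<circ> q"
  shows "p = q"
proof
  fix i show "p i = q i"
  proof (cases "i \<in> {1..n}")
    case True
    then have "p i \<in> {1..n}" "q i \<in> {1..n}" "lam (p i) = lam (q i)"
      using assms(2-4) permutes_in_image by (metis comp_apply)+
    then show ?thesis using assms(1) unfolding labelling_def bij_betw_def inj_on_def by blast
  qed (use assms(2,3) permutes_not_in in metis)
qed

lemma labellings_differ_by_permutes:
  assumes "labelling n U lam" "labelling n U mu"
  obtains p where "p permutes {1..n}" "mu = lam \<circ> p"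
proof
  define p where "p i = (if i \<in> {1..n} then inv_into {1..n} lam (mu i) else i)" for i
  have lam: "bij_betw lam {1..n} U" "lam \<in> extensional {1..n}"
    and mu: "bij_betw mu {1..n} U" "mu \<in> extensional {1..n}"
    using assms unfolding labelling_def by auto
  have "bij_betw (inv_into {1..n} lam \<circ> mu) {1..n} {1..n}"
    using lam mu by (metis bij_betw_inv_into bij_betw_trans)
  then have "bij_betw p {1..n} {1..n}"
    by (rule bij_betw_cong[THEN iffD1, rotated]) (simp add: p_def)
  then show "p permutes {1..n}" by (rule bij_imp_permutes) (auto simp: p_def)
  show "mu = lam \<circ> p"
  proof
    fix i show "mu i = (lam \<circ> p) i"
    proof (cases "i \<in> {1..n}")
      case True
      then have "mu i \<in> lam ` {1..n}" using lam mu by (metis bij_betw_apply bij_betw_imp_surj_on)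
      then show ?thesis using True by (simp add: p_def f_inv_into_f)
    qed (use lam mu in \<open>auto simp: p_def extensional_def\<close>)
  qed
qed

lemma labelling_transport:
  assumes "labelling n U lam" "bij_betw f U V"
  shows "labelling n V (restrict (f \<circ> lam) {1..n})"
proof -
  have "bij_betw (f \<circ> lam) {1..n} V" using assms unfolding labelling_def by (metis bij_betw_trans)
  then show ?thesis unfolding labelling_def by (simp add: bij_betw_cong[of "{1..n}" _ "f \<circ> lam"])
qed

lemma mem_lcoset_cyc_group: "mu \<in> lcoset lam (cyc_group \<sigma>) \<longleftrightarrow> (\<exists>a. mu = lam \<circ> \<sigma> ^^ a)"
  unfolding lcoset_def cyc_group_def by auto

lemma lcoset_cyc_group_self: "lam \<in> lcoset lam (cyc_group \<sigma>)"
  unfolding mem_lcoset_cyc_group by (rule exI[of _ 0]) simp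

lemma lcoset_cyc_group_subset:
  assumes "lam \<in> lcoset mu (cyc_group \<sigma>)"
  shows "lcoset lam (cyc_group \<sigma>) \<subseteq> lcoset mu (cyc_group \<sigma>)"
proof
  obtain a where a: "lam = mu \<circ> \<sigma> ^^ a" using assms unfolding mem_lcoset_cyc_group by blast
  fix nu assume "nu \<in> lcoset lam (cyc_group \<sigma>)"
  then obtain b where "nu = lam \<circ> \<sigma> ^^ b" unfolding mem_lcoset_cyc_group by blast
  then have "nu = mu \<circ> \<sigma> ^^ (a + b)" using a by (simp add: funpow_add comp_assoc)
  then show "nu \<in> lcoset mu (cyc_group \<sigma>)" unfolding mem_lcoset_cyc_group by blast
qed

lemma funpow_inverse_of_periodic:
  assumes "\<sigma> ^^ N = id" "0 < N"
  shows "\<sigma> ^^ ((N - 1) * a) \<circ> \<sigma> ^^ a = id" "\<sigma> ^^ a \<circ> \<sigma> ^^ ((N - 1) * a) = id"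
proof -
  have "(N - 1) * a + a = N * a" using assms(2) by (cases N) auto
  then have "\<sigma> ^^ ((N - 1) * a) \<circ> \<sigma> ^^ a = (\<sigma> ^^ N) ^^ a"
    by (simp add: funpow_add[symmetric] funpow_mult)
  then show "\<sigma> ^^ ((N - 1) * a) \<circ> \<sigma> ^^ a = id" using assms(1) by simp
  then show "\<sigma> ^^ a \<circ> \<sigma> ^^ ((N - 1) * a) = id" by (simp add: funpow_add[symmetric] add.commute)
qed

lemma lcoset_cyc_group_eq:
  assumes "\<sigma> ^^ N = id" "0 < N" "mu \<in> lcoset lam (cyc_group \<sigma>)"
  shows "lcoset mu (cyc_group \<sigma>) = lcoset lam (cyc_group \<sigma>)"
proof
  obtain a where a: "mu = lam \<circ> \<sigma> ^^ a" using assms(3) unfolding mem_lcoset_cyc_group by blast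
  then have "lam = mu \<circ> \<sigma> ^^ ((N - 1) * a)"
    using funpow_inverse_of_periodic(2)[OF assms(1,2)] by (simp add: comp_assoc)
  then show "lcoset lam (cyc_group \<sigma>) \<subseteq> lcoset mu (cyc_group \<sigma>)"
    by (intro lcoset_cyc_group_subset) (auto simp: mem_lcoset_cyc_group)
qed (rule lcoset_cyc_group_subset[OF assms(3)])

lemma image_comp_lcoset_cyc_group:
  assumes "\<tau> \<circ> \<sigma> = \<rho> \<circ> \<tau>"
  shows "(\<lambda>mu. mu \<circ> \<tau>) ` lcoset lam (cyc_group \<rho>) = lcoset (lam \<circ> \<tau>) (cyc_group \<sigma>)"
proof -
  have "\<rho> ^^ k \<circ> \<tau> = \<tau> \<circ> \<sigma> ^^ k" for k
  proof (induction k)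
    case (Suc k)
    have "\<rho> ^^ Suc k \<circ> \<tau> = \<rho> \<circ> (\<tau> \<circ> \<sigma> ^^ k)" by (simp only: funpow.simps(2) comp_assoc Suc.IH)
    also have "\<dots> = \<tau> \<circ> \<sigma> ^^ Suc k" using assms by (simp flip: comp_assoc)
    finally show ?case .
  qed simp
  then show ?thesis unfolding lcoset_def cyc_group_def image_image by (simp add: comp_assoc)
qed

lemma quot_transport_lcoset:
  assumes "\<sigma> permutes {1..n}"
  shows "quot_transport n f (lcoset lam (cyc_group \<sigma>)) = lcoset (restrict (f \<circ> lam) {1..n}) (cyc_group \<sigma>)"
proof -
  have "restrict (f \<circ> (lam \<circ> \<sigma> ^^ k)) {1..n} = restrict (f \<circ> lam) {1..n} \<circ> \<sigma> ^^ k" for k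
    using restrict_comp_permutes[OF permutes_funpow[OF assms], of "f \<circ> lam"] by (simp add: o_assoc)
  then show ?thesis unfolding quot_transport_def lcoset_def cyc_group_def image_image by simp
qed

lemma quot_transport_image_comp:
  assumes "\<tau> permutes {1..n}"
  shows "quot_transport n f ((\<lambda>lam. lam \<circ> \<tau>) ` S) = (\<lambda>lam. lam \<circ> \<tau>) ` quot_transport n f S"
proof -
  have "restrict (f \<circ> (lam \<circ> \<tau>)) {1..n} = restrict (f \<circ> lam) {1..n} \<circ> \<tau>" for lam
    using restrict_comp_permutes[OF assms, of "f \<circ> lam"] by (simp only: o_assoc)
  then show ?thesis unfolding quot_transport_def image_image by simp
qed

lemma nat_set_eq_multiples:
  fixes A :: "nat set"
  assumes add: "\<And>a b. a \<in> A \<Longrightarrow> b \<in> A \<Longrightarrow> a + b \<in> A"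
    and diff: "\<And>a b. a \<in> A \<Longrightarrow> b \<in> A \<Longrightarrow> b \<le> a \<Longrightarrow> a - b \<in> A"
    and "m \<in> A" "0 < m"
  obtains g where "0 < g" "A = {a. g dvd a}"
proof
  define g where "g = (LEAST g. 0 < g \<and> g \<in> A)"
  have g: "0 < g" "g \<in> A" unfolding g_def using LeastI[of "\<lambda>g. 0 < g \<and> g \<in> A"] assms(3,4) by auto
  show "0 < g" by (fact g(1))
  have "0 \<in> A" using diff[OF assms(3) assms(3)] by simp
  then have multiple: "t * g \<in> A" for t by (induction t) (simp_all add: add g(2))
  show "A = {a. g dvd a}"
  proof (intro set_eqI iffI)
    fix a assume "a \<in> A"
    then have "a - a div g * g \<in> A" by (simp add: diff multiple)
    then have "a mod g \<in> A" by (simp add: minus_div_mult_eq_mod)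
    have "a mod g = 0"
    proof (rule ccontr)
      assume "a mod g \<noteq> 0"
      then have "0 < a mod g \<and> a mod g \<in> A" using \<open>a mod g \<in> A\<close> by simp
      then have "g \<le> a mod g" unfolding g_def by (rule Least_le)
      then show False using mod_less_divisor[OF g(1), of a] by linarith
    qed
    then show "a \<in> {a. g dvd a}" by auto
  qed (auto simp: multiple mult.commute)
qed

lemma card_multiples_below:
  fixes g n :: nat
  assumes "0 < g" "g dvd n"
  shows "card {r. r < n \<and> g dvd r} = n div g"
proof -
  have "{r. r < n \<and> g dvd r} = (\<lambda>t. t * g) ` {..<n div g}"
    using assms by (auto elim!: dvdE simp: mult.commute[of g] div_mult_self1_is_m
        intro!: image_eqI dest: less_mult_imp_div_less)
  then show ?thesis using assms(1) by (simp add: card_image inj_on_def)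
qed

section \<open>The rotation and Steggall patterns\<close>

locale steggall =
  fixes n :: nat
  assumes n_pos: "0 < n"
begin

definition rot :: "nat \<Rightarrow> nat" where
  "rot = std_perm [n]"

lemma rot_apply: "rot i = (if i \<in> {1..n} then i mod n + 1 else i)"
  unfolding rot_def by (rule std_perm_single)

lemma rot_pow_outside: "i \<notin> {1..n} \<Longrightarrow> (rot ^^ a) i = i"
  by (induction a) (auto simp: rot_apply)

lemma rot_pow_Suc_apply: "j < n \<Longrightarrow> (rot ^^ a) (Suc j) = Suc ((j + a) mod n)"
proof (induction a)
  case (Suc a)
  have "Suc ((j + a) mod n) \<in> {1..n}" using mod_less_divisor[OF n_pos] by (simp add: Suc_leI)
  then have "rot (Suc ((j + a) mod n)) = Suc ((j + a) mod n) mod n + 1"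
    by (simp add: rot_apply)
  then have "(rot ^^ Suc a) (Suc j) = Suc ((j + a) mod n) mod n + 1"
    using Suc by simp
  then show ?case by (simp add: mod_Suc_eq)
qed simp

lemma mem_atLeastAtMost_1_iff: "i \<in> {1..n} \<longleftrightarrow> (\<exists>j<n. i = Suc j)"
  by (cases i) auto

lemma rot_pow_n: "rot ^^ n = id"
proof
  fix i show "(rot ^^ n) i = id i"
  proof (cases "i \<in> {1..n}")
    case True
    then obtain j where "j < n" "i = Suc j" using mem_atLeastAtMost_1_iff by blast
    then show ?thesis by (simp add: rot_pow_Suc_apply)
  qed (simp add: rot_pow_outside)
qed

lemma rot_pow_eq_iff: "rot ^^ a = rot ^^ b \<longleftrightarrow> a mod n = b mod n"
proof
  assume "rot ^^ a = rot ^^ b"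
  then have "(rot ^^ a) (Suc 0) = (rot ^^ b) (Suc 0)" by simp
  then show "a mod n = b mod n" using n_pos by (simp add: rot_pow_Suc_apply)
next
  assume ab: "a mod n = b mod n"
  show "rot ^^ a = rot ^^ b"
  proof
    fix i show "(rot ^^ a) i = (rot ^^ b) i"
    proof (cases "i \<in> {1..n}")
      case True
      then obtain j where "j < n" "i = Suc j" using mem_atLeastAtMost_1_iff by blast
      moreover have "(j + a) mod n = (j + b) mod n" using ab by (metis mod_add_right_eq)
      ultimately show ?thesis by (simp add: rot_pow_Suc_apply)
    qed (simp add: rot_pow_outside)
  qed
qed

lemma rot_pow_mod: "rot ^^ (a mod n) = rot ^^ a"
  by (simp add: rot_pow_eq_iff)

lemmas rot_pow_inverse = funpow_inverse_of_periodic[OF rot_pow_n n_pos]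

lemma rot_pow_comp_eq_iff: "rot ^^ k \<circ> f = g \<longleftrightarrow> f = rot ^^ ((n - 1) * k) \<circ> g"
proof
  assume "rot ^^ k \<circ> f = g"
  then have "rot ^^ ((n - 1) * k) \<circ> g = (rot ^^ ((n - 1) * k) \<circ> rot ^^ k) \<circ> f" by (simp add: comp_assoc)
  then show "f = rot ^^ ((n - 1) * k) \<circ> g" by (simp only: rot_pow_inverse id_comp)
next
  assume "f = rot ^^ ((n - 1) * k) \<circ> g"
  then show "rot ^^ k \<circ> f = g" by (simp only: o_assoc rot_pow_inverse id_comp)
qed

lemma rot_pow_permutes: "(rot ^^ a) permutes {1..n}"
  using rot_pow_inverse by (rule permutes_if_inverse) (simp add: rot_pow_outside)

lemma rot_permutes: "rot permutes {1..n}"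
  using rot_pow_permutes[of 1] by simp

lemma stg_act_eq_rot:
  assumes "P permutes {1..n}"
  shows "stg_act n r k P = rot ^^ k \<circ> P \<circ> rot ^^ r"
proof
  fix i show "stg_act n r k P i = (rot ^^ k \<circ> P \<circ> rot ^^ r) i"
  proof (cases "i \<in> {1..n}")
    case True
    then obtain j where j: "j < n" "i = Suc j" using mem_atLeastAtMost_1_iff by blast
    have "Suc ((j + r) mod n) \<in> {1..n}" using mod_less_divisor[OF n_pos] by (simp add: Suc_leI)
    then have "P (Suc ((j + r) mod n)) \<in> {1..n}" using permutes_in_image[OF assms] by blast
    then obtain j' where "j' < n" "P (Suc ((j + r) mod n)) = Suc j'" using mem_atLeastAtMost_1_iff by blast
    then show ?thesis using True j by (simp add: stg_act_def rot_pow_Suc_apply)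
  next
    case False
    then show ?thesis by (simp add: stg_act_def rot_pow_outside permutes_not_in[OF assms] del: atLeastAtMost_iff)
  qed
qed

lemma mem_stg_orbit_iff:
  assumes "P permutes {1..n}"
  shows "Q \<in> stg_orbit n P \<longleftrightarrow> (\<exists>k r. Q = rot ^^ k \<circ> P \<circ> rot ^^ r)"
proof
  assume "\<exists>k r. Q = rot ^^ k \<circ> P \<circ> rot ^^ r"
  then obtain k r where "Q = rot ^^ k \<circ> P \<circ> rot ^^ r" by blast
  then have "Q = stg_act n (r mod n) (k mod n) P" by (simp add: stg_act_eq_rot[OF assms] rot_pow_mod)
  moreover have "r mod n < n" "k mod n < n" using n_pos by simp_all
  ultimately show "Q \<in> stg_orbit n P" unfolding stg_orbit_def by blast
qed (auto simp: stg_orbit_def stg_act_eq_rot[OF assms])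

lemma stg_orbit_self: "P permutes {1..n} \<Longrightarrow> P \<in> stg_orbit n P"
  by (simp add: mem_stg_orbit_iff exI[of _ 0])

lemma stg_orbit_permutes:
  assumes "P permutes {1..n}" "Q \<in> stg_orbit n P"
  shows "Q permutes {1..n}"
proof -
  obtain k r where "Q = rot ^^ k \<circ> P \<circ> rot ^^ r" using assms mem_stg_orbit_iff by blast
  then show ?thesis by (simp only:) (intro permutes_compose rot_pow_permutes assms(1))
qed

lemma stg_orbit_subset:
  assumes "P permutes {1..n}" "Q \<in> stg_orbit n P"
  shows "stg_orbit n Q \<subseteq> stg_orbit n P"
proof
  obtain k r where Q: "Q = rot ^^ k \<circ> P \<circ> rot ^^ r" using assms mem_stg_orbit_iff by blast
  fix R assume "R \<in> stg_orbit n Q"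
  then obtain k' r' where "R = rot ^^ k' \<circ> Q \<circ> rot ^^ r'"
    using mem_stg_orbit_iff stg_orbit_permutes[OF assms] by blast
  then have "R = rot ^^ (k' + k) \<circ> P \<circ> rot ^^ (r + r')" using Q by (simp add: funpow_add comp_assoc)
  then show "R \<in> stg_orbit n P" using mem_stg_orbit_iff[OF assms(1)] by blast
qed

lemma stg_orbit_eq:
  assumes "P permutes {1..n}" "Q \<in> stg_orbit n P"
  shows "stg_orbit n Q = stg_orbit n P"
proof
  obtain k r where "Q = rot ^^ k \<circ> P \<circ> rot ^^ r" using assms mem_stg_orbit_iff by blast
  then have "rot ^^ ((n - 1) * k) \<circ> Q \<circ> rot ^^ ((n - 1) * r)
      = (rot ^^ ((n - 1) * k) \<circ> rot ^^ k) \<circ> P \<circ> (rot ^^ r \<circ> rot ^^ ((n - 1) * r))"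
    by (simp only: comp_assoc)
  also have "\<dots> = P" by (simp only: rot_pow_inverse id_comp comp_id)
  finally have "P \<in> stg_orbit n Q" using mem_stg_orbit_iff stg_orbit_permutes[OF assms] by blast
  then show "stg_orbit n P \<subseteq> stg_orbit n Q" by (rule stg_orbit_subset[OF stg_orbit_permutes[OF assms]])
qed (rule stg_orbit_subset[OF assms])

definition representative :: "(nat \<Rightarrow> nat) set \<Rightarrow> nat \<Rightarrow> nat" where
  "representative Q = (SOME P. P \<in> Q)"

lemma pattern_stab_eq: "pattern_stab n Q = stg_stab n (representative Q)"
  unfolding pattern_stab_def representative_def ..

lemma SP_representative:
  assumes "Q \<in> SP n"
  shows "representative Q \<in> Q" "representative Q permutes {1..n}" "Q = stg_orbit n (representative Q)"
proof -
  obtain P where P: "P permutes {1..n}" "Q = stg_orbit n P" using assms unfolding SP_def by blast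
  then have "P \<in> Q" using stg_orbit_self by blast
  then show rep: "representative Q \<in> Q" unfolding representative_def by (rule someI[of "\<lambda>P. P \<in> Q"])
  then show "representative Q permutes {1..n}" "Q = stg_orbit n (representative Q)"
    using P stg_orbit_permutes stg_orbit_eq by blast+
qed

definition index_shifts :: "(nat \<Rightarrow> nat) \<Rightarrow> nat set" where
  "index_shifts P = {r. \<exists>k. rot ^^ k \<circ> P \<circ> rot ^^ r = P}"

lemma index_shifts_eq_multiples:
  obtains g where "0 < g" "g dvd n" "index_shifts P = {r. g dvd r}"
proof -
  have add: "a + b \<in> index_shifts P" if a: "a \<in> index_shifts P" and b: "b \<in> index_shifts P" for a b
  proof -
    obtain k k' where k: "rot ^^ k \<circ> P \<circ> rot ^^ a = P" and k': "rot ^^ k' \<circ> P \<circ> rot ^^ b = P"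
      using a b unfolding index_shifts_def by blast
    have "rot ^^ (k' + k) \<circ> P \<circ> rot ^^ (a + b) = rot ^^ k' \<circ> (rot ^^ k \<circ> P \<circ> rot ^^ a) \<circ> rot ^^ b"
      by (simp add: funpow_add comp_assoc)
    also have "\<dots> = P" using k k' by (simp only:)
    finally show ?thesis unfolding index_shifts_def by blast
  qed
  have diff: "a - b \<in> index_shifts P"
    if a: "a \<in> index_shifts P" and b: "b \<in> index_shifts P" and ba: "b \<le> a" for a b
  proof -
    obtain k k' where k: "rot ^^ k \<circ> P \<circ> rot ^^ a = P" and k': "rot ^^ k' \<circ> P \<circ> rot ^^ b = P"
      using a b unfolding index_shifts_def by blast
    have shift: "rot ^^ ((n - 1) * k') \<circ> P = P \<circ> rot ^^ b"
      using k' rot_pow_comp_eq_iff by (metis comp_assoc)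
    have "rot ^^ (k + (n - 1) * k') \<circ> P \<circ> rot ^^ (a - b)
        = rot ^^ k \<circ> (rot ^^ ((n - 1) * k') \<circ> P) \<circ> rot ^^ (a - b)"
      by (simp add: funpow_add comp_assoc)
    also have "\<dots> = rot ^^ k \<circ> (P \<circ> rot ^^ b) \<circ> rot ^^ (a - b)" by (simp only: shift)
    also have "\<dots> = rot ^^ k \<circ> P \<circ> rot ^^ a" using ba by (simp add: comp_assoc flip: funpow_add)
    finally have "rot ^^ (k + (n - 1) * k') \<circ> P \<circ> rot ^^ (a - b) = P" using k by simp
    then show ?thesis unfolding index_shifts_def by blast
  qed
  have "n \<in> index_shifts P" unfolding index_shifts_def by (auto simp: rot_pow_n intro: exI[of _ 0])
  then obtain g where g: "0 < g" "index_shifts P = {r. g dvd r}"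
    using nat_set_eq_multiples[OF add diff _ n_pos] by blast
  then show ?thesis using that \<open>n \<in> index_shifts P\<close> by blast
qed

lemma card_stg_stab:
  assumes "P permutes {1..n}"
  shows "card (stg_stab n P) = card {r. r < n \<and> r \<in> index_shifts P}"
proof (rule bij_betw_same_card[of fst], rule bij_betw_imageI)
  show "inj_on fst (stg_stab n P)"
  proof (rule inj_onI)
    fix x y assume "x \<in> stg_stab n P" "y \<in> stg_stab n P" "fst x = fst y"
    moreover obtain r k r' k' where "x = (r, k)" "y = (r', k')" by fastforce
    ultimately have "r' = r" "(r, k) \<in> stg_stab n P" "(r, k') \<in> stg_stab n P" by auto
    then have "k < n" "k' < n" "rot ^^ k \<circ> (P \<circ> rot ^^ r) = rot ^^ k' \<circ> (P \<circ> rot ^^ r)"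
      by (auto simp: stg_stab_def stg_act_eq_rot[OF assms] comp_assoc)
    moreover have "(P \<circ> rot ^^ r) permutes {1..n}" by (rule permutes_compose[OF rot_pow_permutes assms])
    ultimately have "k = k'" using permutes_comp_cancel_right by (metis rot_pow_eq_iff mod_less)
    then show "x = y" using \<open>x = (r, k)\<close> \<open>y = (r', k')\<close> \<open>r' = r\<close> by simp
  qed
  show "fst ` stg_stab n P = {r. r < n \<and> r \<in> index_shifts P}"
  proof (intro set_eqI iffI)
    fix r assume "r \<in> {r. r < n \<and> r \<in> index_shifts P}"
    then obtain k where "r < n" "rot ^^ (k mod n) \<circ> P \<circ> rot ^^ r = P"
      unfolding index_shifts_def by (auto simp: rot_pow_mod)
    then have "(r, k mod n) \<in> stg_stab n P"
      using n_pos by (simp add: stg_stab_def stg_act_eq_rot[OF assms])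
    then show "r \<in> fst ` stg_stab n P" by force
  qed (auto simp: stg_stab_def index_shifts_def stg_act_eq_rot[OF assms])
qed

lemma stg_stab_card:
  assumes "P permutes {1..n}" "d = card (stg_stab n P)"
  shows "d dvd n" "index_shifts P = {r. (n div d) dvd r}"
proof -
  obtain g where g: "0 < g" "g dvd n" "index_shifts P = {r. g dvd r}"
    by (rule index_shifts_eq_multiples)
  have "d = n div g" using card_multiples_below[OF g(1,2)] assms card_stg_stab g(3) by simp
  then have n: "n = d * g" using g(2) by simp
  then show "d dvd n" by simp
  have "n div d = g" using n n_pos by simp
  then show "index_shifts P = {r. (n div d) dvd r}" using g(3) by simp
qed

subsection \<open>Transposing the grid\<close>

text \<open>Cell (q, r) of an (n div d) x d grid is read row-wise as q * d + r + 1 and column-wise as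
  q + r * (n div d) + 1. The rows are the cycles of the standard permutation of type
  (d, ..., d); the columns are the cycles of the power rot ^^ (n div d).\<close>

definition grid_transpose :: "nat \<Rightarrow> nat \<Rightarrow> nat" where
  "grid_transpose d i = (if i \<in> {1..n} then (i - 1) div d + (i - 1) mod d * (n div d) + 1 else i)"

lemma complementary_divisor:
  assumes "d dvd n"
  shows "0 < d" "n div d dvd n" "n div (n div d) = d"
proof -
  show "0 < d" using dvd_pos_nat[OF n_pos assms] .
  show "n div d dvd n" using assms by (metis dvd_div_mult_self dvd_triv_left)
  show "n div (n div d) = d" using div_div_eq_right[OF assms dvd_refl] n_pos by simp
qed

lemma grid_transpose_outside: "i \<notin> {1..n} \<Longrightarrow> grid_transpose d i = i"
  unfolding grid_transpose_def by (rule if_not_P)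

lemma grid_cell_cases:
  assumes "d dvd n" "i \<in> {1..n}"
  obtains q r where "q < n div d" "r < d" "i = q * d + r + 1"
proof
  show "(i - 1) mod d < d" using complementary_divisor(1)[OF assms(1)] by simp
  have "i - 1 < n" using assms(2) by auto
  then have "i - 1 < n div d * d" using assms(1) by simp
  then show "(i - 1) div d < n div d" by (rule less_mult_imp_div_less)
  have "(i - 1) div d * d + (i - 1) mod d = i - 1" by (rule div_mult_mod_eq)
  moreover have "1 \<le> i" using assms(2) by simp
  ultimately show "i = (i - 1) div d * d + (i - 1) mod d + 1" by linarith
qed

lemma grid_transpose_cell:
  assumes "d dvd n" "q < n div d" "r < d"
  shows "grid_transpose d (q * d + r + 1) = q + r * (n div d) + 1"
proof -
  have "Suc q * d \<le> n div d * d" using assms(2) by (intro mult_le_mono1) simp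
  then have "q * d + r + 1 \<in> {1..n}" using assms(1,3) by simp
  then show ?thesis using assms(3) by (simp add: grid_transpose_def)
qed

lemma grid_transpose_inverse:
  assumes "d dvd n"
  shows "grid_transpose (n div d) \<circ> grid_transpose d = id"
proof
  fix i show "(grid_transpose (n div d) \<circ> grid_transpose d) i = id i"
  proof (cases "i \<in> {1..n}")
    case True
    then obtain q r where qr: "q < n div d" "r < d" "i = q * d + r + 1"
      using grid_cell_cases[OF assms] by blast
    have "grid_transpose (n div d) (r * (n div d) + q + 1) = r + q * (n div (n div d)) + 1"
      using grid_transpose_cell[OF complementary_divisor(2)[OF assms]] qr complementary_divisor(3)[OF assms] by simp
    then have "grid_transpose (n div d) (r * (n div d) + q + 1) = r + q * d + 1"
      using complementary_divisor(3)[OF assms] by simp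
    then show ?thesis using grid_transpose_cell[OF assms qr(1,2)] qr(3) by (simp add: add.commute)
  qed (simp add: grid_transpose_outside)
qed

lemma grid_transpose_permutes:
  assumes "d dvd n"
  shows "grid_transpose d permutes {1..n}"
proof (rule permutes_if_inverse)
  show "grid_transpose (n div d) \<circ> grid_transpose d = id" using assms by (rule grid_transpose_inverse)
  show "grid_transpose d \<circ> grid_transpose (n div d) = id"
    using grid_transpose_inverse[OF complementary_divisor(2)[OF assms]] complementary_divisor(3)[OF assms] by simp
qed (rule grid_transpose_outside)

lemma grid_transpose_conj_cell:
  assumes "d dvd n" "q < n div d" "r < d"
  shows "grid_transpose d (std_perm (replicate (n div d) d) (q * d + r + 1))
    = (rot ^^ (n div d)) (grid_transpose d (q * d + r + 1))"
proof -
  define m where "m = n div d"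
  have n: "n = m * d" and qr: "q < m" "r < d" using assms unfolding m_def by simp_all
  have "Suc r * m \<le> d * m" using qr(2) by (intro mult_le_mono1) simp
  then have "q + r * m < n" using qr(1) n by (simp add: mult.commute)
  moreover have "grid_transpose d (q * d + r + 1) = Suc (q + r * m)"
    using grid_transpose_cell[OF assms] unfolding m_def by simp
  ultimately have rhs: "(rot ^^ m) (grid_transpose d (q * d + r + 1)) = Suc ((q + r * m + m) mod n)"
    by (simp add: rot_pow_Suc_apply)
  show ?thesis
  proof (cases "Suc r = d")
    case True
    then have "q + r * m + m = q + n" using n by (simp add: mult.commute flip: True)
    then have "(q + r * m + m) mod n = (q + n) mod n" by (simp only:)
    moreover have "q < n" using qr(1) n complementary_divisor(1)[OF assms(1)] by (simp add: less_le_trans)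
    ultimately have "(q + r * m + m) mod n = q" by simp
    moreover have "std_perm (replicate m d) (q * d + r + 1) = q * d + 0 + 1"
      using std_perm_replicate_block[OF qr] True by simp
    moreover have "grid_transpose d (q * d + 0 + 1) = q + 0 * m + 1"
      using grid_transpose_cell[OF assms(1,2), of 0] complementary_divisor(1)[OF assms(1)] unfolding m_def by simp
    ultimately show ?thesis using rhs by (simp add: m_def)
  next
    case False
    then have "Suc (Suc r) * m \<le> d * m" using qr(2) by (intro mult_le_mono1) simp
    then have "q + r * m + m < n" using qr(1) n by (simp add: mult.commute)
    moreover have "std_perm (replicate m d) (q * d + r + 1) = q * d + Suc r + 1"
      using std_perm_replicate_block[OF qr] False by simp
    moreover have "grid_transpose d (q * d + Suc r + 1) = q + Suc r * m + 1"
      using grid_transpose_cell[OF assms(1,2), of "Suc r"] qr(2) False unfolding m_def by simp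
    ultimately show ?thesis using rhs by (simp add: m_def)
  qed
qed

lemma grid_transpose_conj:
  assumes "d dvd n"
  shows "grid_transpose d \<circ> std_perm (replicate (n div d) d) = rot ^^ (n div d) \<circ> grid_transpose d"
proof
  fix i show "(grid_transpose d \<circ> std_perm (replicate (n div d) d)) i = (rot ^^ (n div d) \<circ> grid_transpose d) i"
  proof (cases "i \<in> {1..n}")
    case True
    then obtain q r where "q < n div d" "r < d" "i = q * d + r + 1"
      using grid_cell_cases[OF assms] by blast
    then show ?thesis using grid_transpose_conj_cell[OF assms] by simp
  qed (simp add: grid_transpose_outside rot_pow_outside std_perm_replicate_outside assms)
qed

subsection \<open>The isomorphism of species\<close>

lemma C_single_iff: "s \<in> C_species [n] U \<longleftrightarrow> (\<exists>lam. labelling n U lam \<and> s = lcoset lam (cyc_group rot))"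
  unfolding C_species_def rot_def by (simp add: quot_species_iff)

lemma C_single_memD:
  assumes "s \<in> C_species [n] U" "lam \<in> s"
  shows "labelling n U lam" "s = lcoset lam (cyc_group rot)"
proof -
  obtain l where l: "labelling n U l" "s = lcoset l (cyc_group rot)" using assms(1) C_single_iff by blast
  then obtain a where "lam = l \<circ> rot ^^ a" using assms(2) mem_lcoset_cyc_group by blast
  then show "labelling n U lam" using labelling_comp_permutes[OF l(1) rot_pow_permutes] by simp
  show "s = lcoset lam (cyc_group rot)"
    unfolding l(2) by (rule lcoset_cyc_group_eq[OF rot_pow_n n_pos, symmetric]) (use assms(2) l(2) in simp)
qed

lemma lhs_species_memD:
  assumes "x \<in> lhs_species n U"
  shows "fst x \<in> C_species [n] U" "snd x \<in> C_species [n] U"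
  using assms unfolding lhs_species_def by auto

lemma C_replicate_iff:
  assumes "d dvd n"
  shows "s \<in> C_species (replicate (n div d) d) U \<longleftrightarrow>
    (\<exists>lam. labelling n U lam \<and> s = lcoset lam (cyc_group (std_perm (replicate (n div d) d))))"
  using assms unfolding C_species_def by (simp add: quot_species_iff sum_list_replicate)

definition pattern :: "(nat \<Rightarrow> 'a) set \<times> (nat \<Rightarrow> 'a) set \<Rightarrow> (nat \<Rightarrow> nat) set" where
  "pattern x = {P. P permutes {1..n} \<and> (\<exists>lam \<in> fst x. \<exists>mu \<in> snd x. lam = mu \<circ> P)}"

lemma pattern_eq_stg_orbit:
  assumes x: "x \<in> lhs_species n U" and lam: "lam \<in> fst x" and mu: "mu \<in> snd x"
    and P: "P permutes {1..n}" "lam = mu \<circ> P"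
  shows "pattern x = stg_orbit n P"
proof -
  note fst_eq = C_single_memD(2)[OF lhs_species_memD(1)[OF x] lam]
  note snd_eq = C_single_memD(2)[OF lhs_species_memD(2)[OF x] mu]
  have mu_labelling: "labelling n U mu" using C_single_memD(1)[OF lhs_species_memD(2)[OF x] mu] .
  show ?thesis
  proof (intro set_eqI iffI)
    fix P' assume "P' \<in> pattern x"
    then obtain lam' mu' where P': "P' permutes {1..n}" "lam' \<in> fst x" "mu' \<in> snd x" "lam' = mu' \<circ> P'"
      unfolding pattern_def by blast
    obtain a b where "lam' = lam \<circ> rot ^^ a" "mu' = mu \<circ> rot ^^ b"
      using P'(2,3) fst_eq snd_eq mem_lcoset_cyc_group by blast
    then have "mu \<circ> (P \<circ> rot ^^ a) = mu \<circ> (rot ^^ b \<circ> P')" using P P'(4) by (simp add: comp_assoc)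
    then have "rot ^^ b \<circ> P' = P \<circ> rot ^^ a"
      using labelling_comp_cancel[OF mu_labelling] P(1) P'(1) rot_pow_permutes by (metis permutes_compose)
    then show "P' \<in> stg_orbit n P" unfolding rot_pow_comp_eq_iff mem_stg_orbit_iff[OF P(1)]
      by (auto simp: comp_assoc)
  next
    fix P' assume P': "P' \<in> stg_orbit n P"
    then obtain k r where kr: "P' = rot ^^ k \<circ> P \<circ> rot ^^ r" using mem_stg_orbit_iff[OF P(1)] by blast
    have "lam \<circ> rot ^^ r \<in> fst x" "mu \<circ> rot ^^ ((n - 1) * k) \<in> snd x"
      using fst_eq snd_eq by (auto simp: mem_lcoset_cyc_group)
    moreover have "lam \<circ> rot ^^ r = (mu \<circ> rot ^^ ((n - 1) * k)) \<circ> P'"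
    proof -
      have "(mu \<circ> rot ^^ ((n - 1) * k)) \<circ> P' = mu \<circ> (rot ^^ ((n - 1) * k) \<circ> rot ^^ k) \<circ> P \<circ> rot ^^ r"
        using kr by (simp only: comp_assoc)
      then show ?thesis using P(2) by (simp only: rot_pow_inverse comp_id)
    qed
    ultimately show "P' \<in> pattern x" unfolding pattern_def using stg_orbit_permutes[OF P(1) P'] by blast
  qed
qed

lemma lhs_species_relative_position:
  assumes "x \<in> lhs_species n U"
  obtains lam mu P where "lam \<in> fst x" "mu \<in> snd x" "P permutes {1..n}" "lam = mu \<circ> P"
proof -
  obtain lam mu where "labelling n U lam" "fst x = lcoset lam (cyc_group rot)"
    "labelling n U mu" "snd x = lcoset mu (cyc_group rot)"
    using lhs_species_memD[OF assms] unfolding C_single_iff by blast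
  then show ?thesis
    using that lcoset_cyc_group_self labellings_differ_by_permutes by metis
qed

lemma pattern_in_SP:
  assumes "x \<in> lhs_species n U"
  shows "pattern x \<in> SP n"
proof -
  obtain lam mu P where "lam \<in> fst x" "mu \<in> snd x" "P permutes {1..n}" "lam = mu \<circ> P"
    using assms by (rule lhs_species_relative_position)
  then show ?thesis unfolding SP_def using pattern_eq_stg_orbit[OF assms] by blast
qed

definition stab_order :: "(nat \<Rightarrow> 'a) set \<times> (nat \<Rightarrow> 'a) set \<Rightarrow> nat" where
  "stab_order x = card (pattern_stab n (pattern x))"

definition aligned :: "(nat \<Rightarrow> 'a) set \<times> (nat \<Rightarrow> 'a) set \<Rightarrow> (nat \<Rightarrow> 'a) set" where
  "aligned x = {lam \<in> fst x. \<exists>mu \<in> snd x. lam = mu \<circ> representative (pattern x)}"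

lemma aligned_nonempty:
  assumes "x \<in> lhs_species n U"
  obtains lam where "lam \<in> aligned x"
  using SP_representative(1)[OF pattern_in_SP[OF assms]] that unfolding aligned_def pattern_def by blast

lemma stab_order_dvd:
  assumes "x \<in> lhs_species n U"
  shows "stab_order x dvd n"
  using stg_stab_card(1) SP_representative(2)[OF pattern_in_SP[OF assms]]
  unfolding stab_order_def pattern_stab_eq by blast

lemma aligned_comp_rot_pow_iff:
  assumes x: "x \<in> lhs_species n U" and lam: "lam \<in> aligned x"
  shows "lam \<circ> rot ^^ a \<in> aligned x \<longleftrightarrow> a \<in> index_shifts (representative (pattern x))"
proof -
  define P where "P = representative (pattern x)"
  have P: "P permutes {1..n}" unfolding P_def by (rule SP_representative(2)[OF pattern_in_SP[OF x]])
  obtain mu where mu: "lam \<in> fst x" "mu \<in> snd x" "lam = mu \<circ> P" using lam unfolding aligned_def P_def by blast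
  note fst_eq = C_single_memD(2)[OF lhs_species_memD(1)[OF x] mu(1)]
  note snd_eq = C_single_memD(2)[OF lhs_species_memD(2)[OF x] mu(2)]
  have mu_labelling: "labelling n U mu" using C_single_memD(1)[OF lhs_species_memD(2)[OF x] mu(2)] .
  show ?thesis unfolding P_def[symmetric]
  proof
    assume "lam \<circ> rot ^^ a \<in> aligned x"
    then obtain mu' where "mu' \<in> snd x" "lam \<circ> rot ^^ a = mu' \<circ> P" unfolding aligned_def P_def by blast
    moreover obtain b where "mu' = mu \<circ> rot ^^ b" using calculation(1) snd_eq mem_lcoset_cyc_group by blast
    ultimately have "mu \<circ> (P \<circ> rot ^^ a) = mu \<circ> (rot ^^ b \<circ> P)" using mu(3) by (simp add: comp_assoc)
    then have "rot ^^ b \<circ> P = P \<circ> rot ^^ a"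
      using labelling_comp_cancel[OF mu_labelling] P rot_pow_permutes by (metis permutes_compose)
    then have "P = rot ^^ ((n - 1) * b) \<circ> (P \<circ> rot ^^ a)" by (simp only: rot_pow_comp_eq_iff)
    then have "rot ^^ ((n - 1) * b) \<circ> P \<circ> rot ^^ a = P" by (metis comp_assoc)
    then show "a \<in> index_shifts P" unfolding index_shifts_def by blast
  next
    assume "a \<in> index_shifts P"
    then obtain k where "rot ^^ k \<circ> (P \<circ> rot ^^ a) = P" unfolding index_shifts_def by (auto simp: comp_assoc)
    then have "lam \<circ> rot ^^ a = (mu \<circ> rot ^^ ((n - 1) * k)) \<circ> P"
      using mu(3) unfolding rot_pow_comp_eq_iff by (simp add: comp_assoc)
    moreover have "lam \<circ> rot ^^ a \<in> fst x" "mu \<circ> rot ^^ ((n - 1) * k) \<in> snd x"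
      using fst_eq snd_eq by (auto simp: mem_lcoset_cyc_group)
    ultimately show "lam \<circ> rot ^^ a \<in> aligned x" unfolding aligned_def P_def by blast
  qed
qed

lemma aligned_eq_lcoset:
  assumes x: "x \<in> lhs_species n U" and lam: "lam \<in> aligned x"
  shows "aligned x = lcoset lam (cyc_group (rot ^^ (n div stab_order x)))"
proof -
  define m where "m = n div stab_order x"
  have shifts: "index_shifts (representative (pattern x)) = {r. m dvd r}"
    unfolding m_def stab_order_def pattern_stab_eq
    using stg_stab_card(2)[OF SP_representative(2)[OF pattern_in_SP[OF x]]] by blast
  note aligned_iff = aligned_comp_rot_pow_iff[OF x lam, unfolded shifts mem_Collect_eq]
  show ?thesis unfolding m_def[symmetric]
  proof (intro set_eqI iffI)
    fix lam' assume lam': "lam' \<in> aligned x"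
    then have "lam' \<in> lcoset lam (cyc_group rot)"
      using C_single_memD(2)[OF lhs_species_memD(1)[OF x]] lam unfolding aligned_def by blast
    then obtain a where a: "lam' = lam \<circ> rot ^^ a" unfolding mem_lcoset_cyc_group by blast
    then obtain t where "a = m * t" using aligned_iff lam' by (blast elim: dvdE)
    then show "lam' \<in> lcoset lam (cyc_group (rot ^^ m))" unfolding a mem_lcoset_cyc_group funpow_mult by blast
  next
    fix lam' assume "lam' \<in> lcoset lam (cyc_group (rot ^^ m))"
    then obtain t where "lam' = lam \<circ> rot ^^ (m * t)" unfolding mem_lcoset_cyc_group funpow_mult by blast
    then show "lam' \<in> aligned x" using aligned_iff by simp
  qed
qed

definition pattern_index :: "nat \<Rightarrow> (nat \<Rightarrow> nat) set \<Rightarrow> nat" where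
  "pattern_index d = (SOME h. bij_betw h {Q \<in> SP n. card (pattern_stab n Q) = d} {..<num_patterns_stab n d})"

lemma pattern_index_bij:
  "bij_betw (pattern_index d) {Q \<in> SP n. card (pattern_stab n Q) = d} {..<num_patterns_stab n d}"
proof -
  have "SP n = stg_orbit n ` {P. P permutes {1..n}}" unfolding SP_def by blast
  then have "finite (SP n)" using finite_permutations[of "{1..n}"] by simp
  then have "finite {Q \<in> SP n. card (pattern_stab n Q) = d}" by simp
  then have "\<exists>h. bij_betw h {Q \<in> SP n. card (pattern_stab n Q) = d} {..<num_patterns_stab n d}"
    unfolding num_patterns_stab_def lessThan_atLeast0 by (rule ex_bij_betw_finite_nat)
  then show ?thesis unfolding pattern_index_def by (rule someI_ex)
qed

definition species_iso :: "(nat \<Rightarrow> 'a) set \<times> (nat \<Rightarrow> 'a) set \<Rightarrow> nat \<times> nat \<times> (nat \<Rightarrow> 'a) set" where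
  "species_iso x = (stab_order x, pattern_index (stab_order x) (pattern x),
     (\<lambda>lam. lam \<circ> grid_transpose (stab_order x)) ` aligned x)"

lemma species_iso_eq:
  assumes "x \<in> lhs_species n U" "lam \<in> aligned x"
  shows "species_iso x = (stab_order x, pattern_index (stab_order x) (pattern x),
    lcoset (lam \<circ> grid_transpose (stab_order x)) (cyc_group (std_perm (replicate (n div stab_order x) (stab_order x)))))"
  unfolding species_iso_def aligned_eq_lcoset[OF assms]
  by (simp add: image_comp_lcoset_cyc_group grid_transpose_conj stab_order_dvd[OF assms(1)])

lemma species_iso_in_rhs:
  assumes x: "x \<in> lhs_species n U"
  shows "species_iso x \<in> rhs_species n U"
proof -
  obtain lam where lam: "lam \<in> aligned x" using x by (rule aligned_nonempty)
  define d where "d = stab_order x"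
  have d: "d dvd n" unfolding d_def using stab_order_dvd[OF x] .
  have "lam \<in> fst x" "fst x \<in> C_species [n] U"
    using lam lhs_species_memD[OF x] unfolding aligned_def by auto
  then have "labelling n U (lam \<circ> grid_transpose d)"
    using C_single_memD(1) labelling_comp_permutes grid_transpose_permutes[OF d] by blast
  moreover have "pattern_index d (pattern x) < num_patterns_stab n d"
    using bij_betw_apply[OF pattern_index_bij] pattern_in_SP[OF x]
    unfolding d_def stab_order_def by auto
  ultimately show ?thesis
    unfolding species_iso_eq[OF x lam] d_def[symmetric] rhs_species_def
    using d C_replicate_iff[OF d] by blast
qed

lemma species_iso_inj:
  assumes x: "x \<in> lhs_species n U" and y: "y \<in> lhs_species n U" and eq: "species_iso x = species_iso y"
  shows "x = y"
proof -
  define d where "d = stab_order x"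
  have d: "d dvd n" "stab_order y = d" using eq stab_order_dvd[OF x] unfolding d_def species_iso_def by auto
  have "pattern_index d (pattern y) = pattern_index d (pattern x)"
    using eq d(2) unfolding species_iso_def d_def by simp
  moreover have "pattern y \<in> {Q \<in> SP n. card (pattern_stab n Q) = d}" "pattern x \<in> {Q \<in> SP n. card (pattern_stab n Q) = d}"
    using pattern_in_SP[OF x] pattern_in_SP[OF y] d(2) unfolding d_def stab_order_def by auto
  ultimately have pattern: "pattern y = pattern x"
    by (rule inj_onD[OF bij_betw_imp_inj_on[OF pattern_index_bij]])
  have "inj (\<lambda>lam :: nat \<Rightarrow> 'a. lam \<circ> grid_transpose d)"
    using permutes_comp_cancel_right[OF grid_transpose_permutes[OF d(1)]] by (auto intro: injI)
  moreover have "(\<lambda>lam. lam \<circ> grid_transpose d) ` aligned y = (\<lambda>lam. lam \<circ> grid_transpose d) ` aligned x"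
    using eq d(2) unfolding species_iso_def d_def by simp
  ultimately have aligned: "aligned y = aligned x" by (simp add: inj_image_eq_iff)
  obtain lam where lam: "lam \<in> aligned x" using x by (rule aligned_nonempty)
  then obtain mu mu' where mu: "lam \<in> fst x" "mu \<in> snd x" "lam = mu \<circ> representative (pattern x)"
    and mu': "lam \<in> fst y" "mu' \<in> snd y" "lam = mu' \<circ> representative (pattern x)"
    using aligned unfolding aligned_def pattern by blast
  have "mu' = mu"
    using permutes_comp_cancel_right[OF SP_representative(2)[OF pattern_in_SP[OF x]]] mu(3) mu'(3)
    by simp
  have "fst x = lcoset lam (cyc_group rot)" "fst y = lcoset lam (cyc_group rot)"
    "snd x = lcoset mu (cyc_group rot)" "snd y = lcoset mu (cyc_group rot)"
    using C_single_memD(2) lhs_species_memD[OF x] lhs_species_memD[OF y] mu(1,2) mu'(1,2)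
    unfolding \<open>mu' = mu\<close> by blast+
  then show "x = y" by (simp add: prod_eq_iff)
qed

lemma species_iso_surj:
  assumes "z \<in> rhs_species n U"
  shows "z \<in> species_iso ` lhs_species n U"
proof -
  obtain d j s where z: "z = (d, j, s)" and d: "d dvd n" and j: "j < num_patterns_stab n d"
    and s: "s \<in> C_species (replicate (n div d) d) U"
    using assms unfolding rhs_species_def by blast
  obtain mu0 where mu0: "labelling n U mu0" "s = lcoset mu0 (cyc_group (std_perm (replicate (n div d) d)))"
    using s C_replicate_iff[OF d] by blast
  define A where "A = {Q \<in> SP n. card (pattern_stab n Q) = d}"
  define Q where "Q = inv_into A (pattern_index d) j"
  have bij: "bij_betw (pattern_index d) A {..<num_patterns_stab n d}"
    unfolding A_def by (rule pattern_index_bij)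
  have "j \<in> {..<num_patterns_stab n d}" using j by simp
  then have Q: "Q \<in> A" "pattern_index d Q = j"
    unfolding Q_def using bij_betw_apply[OF bij_betw_inv_into[OF bij]] bij_betw_inv_into_right[OF bij] by auto
  define P where "P = representative Q"
  have P: "P permutes {1..n}" "Q = stg_orbit n P"
    using SP_representative Q(1) unfolding A_def P_def by blast+
  define \<tau> where "\<tau> = grid_transpose d"
  have \<tau>: "\<tau> permutes {1..n}" unfolding \<tau>_def using grid_transpose_permutes[OF d] .
  define lam where "lam = mu0 \<circ> inv \<tau>"
  define mu where "mu = lam \<circ> inv P"
  have lam_eq: "lam = mu \<circ> P" and mu0_eq: "mu0 = lam \<circ> \<tau>"
    unfolding mu_def lam_def using permutes_inv_o(2)[OF P(1)] permutes_inv_o(2)[OF \<tau>]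
    by (simp_all add: comp_assoc)
  have "labelling n U lam" "labelling n U mu"
    unfolding mu_def lam_def using mu0(1) \<tau> P(1) by (blast intro: labelling_comp_permutes permutes_inv)+
  then have x: "(lcoset lam (cyc_group rot), lcoset mu (cyc_group rot)) \<in> lhs_species n U"
    (is "?x \<in> _") unfolding lhs_species_def mem_Times_iff C_single_iff by auto
  have mem: "lam \<in> fst ?x" "mu \<in> snd ?x" by (simp_all add: lcoset_cyc_group_self)
  have pattern: "pattern ?x = Q" using pattern_eq_stg_orbit[OF x mem P(1) lam_eq] P(2) by simp
  then have stab: "stab_order ?x = d" using Q(1) unfolding stab_order_def A_def by simp
  have "lam \<in> aligned ?x" unfolding aligned_def pattern P_def[symmetric] using lam_eq mem by blast
  then have "species_iso ?x = z"
    by (simp add: species_iso_eq[OF x] stab pattern Q(2) z mu0(2) mu0_eq \<tau>_def)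
  then show ?thesis using x by blast
qed

lemma species_iso_natural:
  assumes x: "x \<in> lhs_species n U" and f: "bij_betw f U V"
  shows "species_iso (lhs_transport n f x) = rhs_transport n f (species_iso x)"
proof -
  define P where "P = representative (pattern x)"
  have P: "P permutes {1..n}" "pattern x = stg_orbit n P"
    using SP_representative pattern_in_SP[OF x] unfolding P_def by blast+
  obtain lam where lam: "lam \<in> aligned x" using x by (rule aligned_nonempty)
  then obtain mu where mu: "lam \<in> fst x" "mu \<in> snd x" "lam = mu \<circ> P"
    unfolding aligned_def P_def by blast
  note fst = lhs_species_memD(1)[OF x] and snd = lhs_species_memD(2)[OF x]
  define lam' where "lam' = restrict (f \<circ> lam) {1..n}"
  define mu' where "mu' = restrict (f \<circ> mu) {1..n}"
  define y where "y = lhs_transport n f x"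
  have y_eq: "y = (lcoset lam' (cyc_group rot), lcoset mu' (cyc_group rot))"
    unfolding y_def lhs_transport_def lam'_def mu'_def C_single_memD(2)[OF fst mu(1)]
      C_single_memD(2)[OF snd mu(2)] by (simp add: quot_transport_lcoset[OF rot_permutes])
  have "labelling n V lam'" "labelling n V mu'"
    unfolding lam'_def mu'_def using labelling_transport f C_single_memD(1) fst snd mu(1,2) by blast+
  then have y: "y \<in> lhs_species n V" unfolding y_eq lhs_species_def mem_Times_iff C_single_iff by auto
  have lam'_eq: "lam' = mu' \<circ> P" unfolding lam'_def mu'_def mu(3)
    using restrict_comp_permutes[OF P(1), of "f \<circ> mu"] by (simp only: o_assoc)
  have mem: "lam' \<in> fst y" "mu' \<in> snd y" unfolding y_eq by (simp_all add: lcoset_cyc_group_self)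
  have pattern: "pattern y = pattern x" using pattern_eq_stg_orbit[OF y mem P(1) lam'_eq] P(2) by simp
  then have stab: "stab_order y = stab_order x" unfolding stab_order_def by simp
  have "lam' \<in> aligned y" unfolding aligned_def pattern P_def[symmetric] using lam'_eq mem by blast
  then have "aligned y = lcoset lam' (cyc_group (rot ^^ (n div stab_order x)))"
    using aligned_eq_lcoset[OF y] stab by simp
  also have "\<dots> = quot_transport n f (aligned x)"
    unfolding aligned_eq_lcoset[OF x lam] lam'_def by (simp add: quot_transport_lcoset[OF rot_pow_permutes])
  finally have "aligned y = quot_transport n f (aligned x)" .
  then show ?thesis unfolding y_def[symmetric] species_iso_def rhs_transport_def stab pattern
    by (simp add: quot_transport_image_comp[OF grid_transpose_permutes[OF stab_order_dvd[OF x]]])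
qed

end

theorem mainTheorem15:
  fixes n :: nat
  assumes "n \<ge> 1"
  shows "\<exists>\<alpha> :: 'a set \<Rightarrow> ((nat \<Rightarrow> 'a) set \<times> (nat \<Rightarrow> 'a) set) \<Rightarrow> (nat \<times> nat \<times> (nat \<Rightarrow> 'a) set).
           (\<forall>U. finite U \<longrightarrow> bij_betw (\<alpha> U) (lhs_species n U) (rhs_species n U)) \<and>
           (\<forall>U V f. finite U \<longrightarrow> bij_betw f U V \<longrightarrow>
              (\<forall>x \<in> lhs_species n U. \<alpha> V (lhs_transport n f x) = rhs_transport n f (\<alpha> U x)))"
proof -
  interpret steggall n using assms by unfold_locales simp
  have bij: "bij_betw species_iso (lhs_species n U) (rhs_species n U)" for U :: "'a set"
    unfolding bij_betw_def inj_on_def using species_iso_inj species_iso_in_rhs species_iso_surj by blast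
  show ?thesis
    by (rule exI[of _ "\<lambda>_. species_iso"]) (use bij species_iso_natural in blast)
qed

end
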